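(* For every integer $k \ge 1$, with $\theta = 2\pi/(4k+4)$, the $\theta_{4k+4}$-graph on any finite point set in general position is a $\left(1 + \dfrac{2\sin(\theta/2)}{\cos(\theta/2) - \sin(\theta/2)}\right)$-spanner.
   Context: Cones: for $m \ge 2$, $\theta = 2\pi/m$; around each point $u$ draw $m$ rays with consecutive angular separation $\theta$, oriented so the vertical upward ray from $u$ bisects a cone $C_0^u$; cones numbered clockwise, same orientation at every point. General position: no two points on a line parallel to a cone boundary ray, no two on a line perpendicular to a cone bisector, no three collinear. The $\theta_m$-graph on $P$: for each $u\in P$ and each cone $C_i^u$ containing another point of $P$, add an edge from $u$ to the point of $C_i^u$ whose orthogonal projection onto the bisector of $C_i^u$ is closest to $u$; edges weighted by Euclidean length. A graph $H$ on $P$ is a $t$-spanner if $\delta_H(u,w)\le t|uw|$ for all $u,w\in P$. *)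

theory Defs
  imports Complex_Main
begin

text \<open>Points of the plane are complex numbers; Euclidean length is cmod. Cone i (0 <= i < m) at u has bisector direction
  angle pi/2 - i*theta (cone 0 bisected by the upward vertical ray, numbering
  clockwise) and consists of the points v \<noteq> u whose direction from u has angle in
  the half-open interval [pi/2 - i*theta - theta/2, pi/2 - i*theta + theta/2).\<close>

definition cone_angle :: "nat \<Rightarrow> real" where
  "cone_angle m = 2 * pi / real m"

definition bisector_dir :: "nat \<Rightarrow> nat \<Rightarrow> real" where
  "bisector_dir m i = pi / 2 - real i * cone_angle m"

definition in_cone :: "nat \<Rightarrow> nat \<Rightarrow> complex \<Rightarrow> complex \<Rightarrow> bool" where
  "in_cone m i u v \<longleftrightarrow> v \<noteq> u \<and>
     (\<exists>\<phi>. bisector_dir m i - cone_angle m / 2 \<le> \<phi> \<and>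
          \<phi> < bisector_dir m i + cone_angle m / 2 \<and>
          v - u = complex_of_real (cmod (v - u)) * cis \<phi>)"

definition bisector_proj :: "nat \<Rightarrow> nat \<Rightarrow> complex \<Rightarrow> complex \<Rightarrow> real" where
  "bisector_proj m i u v = Re ((v - u) * cnj (cis (bisector_dir m i)))"

definition theta_edge :: "nat \<Rightarrow> complex set \<Rightarrow> complex \<Rightarrow> complex \<Rightarrow> bool" where
  "theta_edge m P u w \<longleftrightarrow> u \<in> P \<and> w \<in> P \<and>
     (\<exists>i<m. in_cone m i u w \<and>
        (\<forall>v\<in>P. in_cone m i u v \<longrightarrow> bisector_proj m i u w \<le> bisector_proj m i u v))"

definition general_position :: "nat \<Rightarrow> complex set \<Rightarrow> bool" where
  "general_position m P \<longleftrightarrow>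
     (\<forall>a\<in>P. \<forall>b\<in>P. a \<noteq> b \<longrightarrow>
        (\<forall>i<m. Im ((b - a) * cnj (cis (bisector_dir m i + cone_angle m / 2))) \<noteq> 0) \<and>
        (\<forall>i<m. Re ((b - a) * cnj (cis (bisector_dir m i))) \<noteq> 0)) \<and>
     (\<forall>a\<in>P. \<forall>b\<in>P. \<forall>c\<in>P. a \<noteq> b \<and> a \<noteq> c \<and> b \<noteq> c \<longrightarrow>
        Im ((b - a) * cnj (c - a)) \<noteq> 0)"

fun path_length :: "complex list \<Rightarrow> real" where
  "path_length (x # y # ys) = cmod (y - x) + path_length (y # ys)"
| "path_length _ = 0"

definition is_path :: "(complex \<Rightarrow> complex \<Rightarrow> bool) \<Rightarrow> complex list \<Rightarrow> complex \<Rightarrow> complex \<Rightarrow> bool" where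
  "is_path E ps u w \<longleftrightarrow> ps \<noteq> [] \<and> hd ps = u \<and> last ps = w \<and>
     (\<forall>j. Suc j < length ps \<longrightarrow> E (ps ! j) (ps ! Suc j) \<or> E (ps ! Suc j) (ps ! j))"

text \<open>t-spanner: delta_H(u,w) \<le> t |uw|, i.e. some path (hence the shortest one, the
  graph being finite) from u to w has length at most t |uw|.\<close>
definition is_spanner :: "complex set \<Rightarrow> (complex \<Rightarrow> complex \<Rightarrow> bool) \<Rightarrow> real \<Rightarrow> bool" where
  "is_spanner P E t \<longleftrightarrow>
     (\<forall>u\<in>P. \<forall>w\<in>P. \<exists>ps. is_path E ps u w \<and> path_length ps \<le> t * cmod (w - u))"

end

theory Submission
  imports Defs
begin

(* Proof idea (the classical potential-function argument for theta-graphs with 4q cones).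
   Rotate the plane so that the bisector of cone i points along the positive real axis
   (cone_frame) and measure a vector z by the potential  Re z + |Im z|.  Write c, s for the
   cosine and sine of half the cone angle; for at least 8 cones, 3 s^2 < c^2 and s < c.
   Claim: if w lies in cone i of u, the theta-graph contains a u-w path of length at most
   potential (cone_frame i (w - u)) / (c - s).  Induct on the rank of |uw| among all pairwise
   distances: let v be the graph neighbour of u in cone i.  Then |vw| < |uw|, and one edge
   u-v consumes at most as much potential as it costs: after moving to v, the potential of
   w - v measured in the frame of the cone of v containing w is at most that measured in the
   frame of cone i (here the number of cones being a multiple of 4 is used: the frames then
   differ by multiples of the cone angle and potential is a quarter-turn symmetric function).
   Finally potential <= |uw| (c + s) for w in cone i, giving the stretch factor
   (c + s) / (c - s) = 1 + 2 s / (c - s).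
   Cones are half-open. *)

section \<open>Trigonometric inequalities\<close>

text \<open>cos x + sin x is a cosine centred at pi/4, hence symmetric and unimodal on [0, pi/2].\<close>
lemma cos_plus_sin_mono:
  assumes "0 \<le> a" "a \<le> x" "x \<le> pi/2 - a"
  shows "cos a + sin a \<le> cos x + sin x"
proof -
  have shift: "cos y + sin y = sqrt 2 * cos (y - pi/4)" for y
    by (simp add: cos_diff cos_45 sin_45 algebra_simps)
  have "cos (\<bar>a - pi/4\<bar>) \<le> cos (\<bar>x - pi/4\<bar>)"
    using assms by (intro cos_monotone_0_pi_le) (auto simp: abs_if)
  then show ?thesis unfolding shift by simp
qed

lemma cos_abs_sin_lattice_quadrant:
  fixes a x th :: real and n :: int and q :: nat
  assumes th: "0 < th" "th * real q = pi/2"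
    and x: "0 \<le> x" "x \<le> pi/2" and a: "\<bar>a\<bar> \<le> th/2" and n: "x - a = of_int n * th"
  shows "cos a + \<bar>sin a\<bar> \<le> cos x + \<bar>sin x\<bar>"
proof -
  have "(-1::real) < of_int n"
  proof -
    have "(-1) * th < of_int n * th" using n x a th by linarith
    then show ?thesis using th by (simp only: mult_less_cancel_right)
  qed
  then have n0: "n \<ge> 0" by simp
  have "of_int n * th < (real q + 1) * th" using n x a th by (simp add: algebra_simps)
  then have nq: "n \<le> int q" using th by (simp add: mult_less_cancel_right)
  have lower: "\<bar>a\<bar> \<le> x"
  proof (cases "n = 0")
    case False
    then have "th \<le> of_int n * th" using n0 th by simp
    then show ?thesis using n a by linarith
  qed (use n x in auto)
  have upper: "x \<le> pi/2 - \<bar>a\<bar>"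
  proof (cases "n = int q")
    case True
    then show ?thesis using n th x by (simp add: algebra_simps)
  next
    case False
    then have "of_int n * th \<le> (real q - 1) * th" using nq th by (intro mult_right_mono) auto
    then show ?thesis using n a th by (simp add: algebra_simps)
  qed
  have "\<bar>a\<bar> \<le> pi" using lower upper pi_gt_zero by linarith
  then have "sin \<bar>a\<bar> = \<bar>sin a\<bar>"
    using sin_ge_zero[of "\<bar>a\<bar>"] by (cases "a \<ge> 0") auto
  moreover have "sin x \<ge> 0" using x by (intro sin_ge_zero) auto
  ultimately show ?thesis using cos_plus_sin_mono[OF _ lower upper] by simp
qed

text \<open>The same for an arbitrary angle y with cos y \<ge> 0: reduce y modulo 2 pi into
  [-pi/2, pi/2] and use the symmetry y \<mapsto> -y.\<close>
lemma cos_abs_sin_lattice: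
  fixes a y th :: real and n :: int and q :: nat
  assumes th: "0 < th" "th * real q = pi/2"
    and a: "\<bar>a\<bar> \<le> th/2" and n: "y - a = of_int n * th" and cy: "cos y \<ge> 0"
  shows "cos a + \<bar>sin a\<bar> \<le> cos y + \<bar>sin y\<bar>"
proof -
  define l where "l = \<lfloor>(y + pi/2) / (2*pi)\<rfloor>"
  define y' where "y' = y - 2 * pi * of_int l"
  have "of_int l * (2*pi) \<le> y + pi/2" "y + pi/2 < (of_int l + 1) * (2*pi)"
    using floor_divide_lower[of "2*pi" "y + pi/2"] floor_divide_upper[of "2*pi" "y + pi/2"]
    unfolding l_def by auto
  then have y'_range: "-pi/2 \<le> y'" "y' < 3*pi/2" unfolding y'_def by (simp_all add: algebra_simps)
  have same: "cos y' = cos y" "sin y' = sin y" unfolding y'_def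
    by (simp_all add: cos_diff sin_diff)
  have y'_upper: "y' \<le> pi/2"
  proof (rule ccontr)
    assume "\<not> y' \<le> pi/2"
    then have "0 < cos (y' - pi)" using y'_range by (intro cos_gt_zero_pi) auto
    then show False using cy same by (simp add: cos_diff)
  qed
  have "y' - a = of_int (n - 4 * int q * l) * th"
    unfolding y'_def using n th(2) by (simp add: algebra_simps)
  then show ?thesis
  proof (cases "y' \<ge> 0")
    case True
    with cos_abs_sin_lattice_quadrant[OF th True y'_upper a \<open>y' - a = _\<close>] same show ?thesis
      by simp
  next
    case False
    have "- y' - (- a) = - (y' - a)" by simp
    also have "\<dots> = of_int (- (n - 4 * int q * l)) * th" using \<open>y' - a = _\<close> by (simp add: algebra_simps)
    finally have "- y' - (- a) = of_int (- (n - 4 * int q * l)) * th" .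
    from cos_abs_sin_lattice_quadrant[OF th _ _ _ this] False y'_range a same show ?thesis
      by simp
  qed
qed

section \<open>Cone frames and the potential\<close>

definition cone_frame :: "nat \<Rightarrow> nat \<Rightarrow> complex \<Rightarrow> complex" where
  "cone_frame m i z = z * cnj (cis (bisector_dir m i))"

definition potential :: "complex \<Rightarrow> real" where
  "potential z = Re z + \<bar>Im z\<bar>"

lemma cone_frame_polar:
  "cone_frame m i (complex_of_real r * cis p) = complex_of_real r * cis (p - bisector_dir m i)"
  unfolding cone_frame_def by (simp add: cis_cnj mult.assoc cis_mult)

lemma cone_frame_diff: "cone_frame m i (w - u) = cone_frame m i (w - v) + cone_frame m i (v - u)"
  unfolding cone_frame_def by (simp add: algebra_simps)

lemma bisector_proj_cone_frame: "bisector_proj m i u v = Re (cone_frame m i (v - u))"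
  unfolding bisector_proj_def cone_frame_def ..

lemma norm_cone_frame [simp]: "cmod (cone_frame m i z) = cmod z"
  unfolding cone_frame_def by (simp add: norm_mult)

lemma potential_polar: "r \<ge> 0 \<Longrightarrow> potential (complex_of_real r * cis p) = r * (cos p + \<bar>sin p\<bar>)"
  unfolding potential_def by (simp add: abs_mult algebra_simps)

lemma norm_le_potential: "Re z \<ge> 0 \<Longrightarrow> cmod z \<le> potential z"
  using cmod_le[of z] unfolding potential_def by simp

lemma cone_exists:
  assumes m: "m > 0" and ne: "w \<noteq> u"
  shows "\<exists>i<m. in_cone m i u w"
proof -
  let ?th = "cone_angle m"
  have th: "?th > 0" and full_turn: "2 * pi = real m * ?th" using m by (simp_all add: cone_angle_def)
  define p0 where "p0 = Arg (w - u)"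
  have polar: "w - u = complex_of_real (cmod (w - u)) * cis p0"
    using rcis_cmod_Arg[of "w - u"] unfolding p0_def rcis_def by simp
  define a0 where "a0 = pi/2 + ?th/2"
  define q where "q = \<lceil>(a0 - p0) / ?th\<rceil> - 1"
  have "of_int q < (a0 - p0) / ?th" "(a0 - p0) / ?th \<le> of_int q + 1"
    unfolding q_def by linarith+
  then have q: "of_int q * ?th < a0 - p0" "a0 - p0 \<le> (of_int q + 1) * ?th"
    using th by (simp_all add: field_simps)
  define i where "i = nat (q mod int m)"
  define d where "d = q div int m"
  have "q = int i + int m * d" and im: "i < m"
    unfolding i_def d_def using m by (simp_all add: nat_less_iff)
  then have qi: "of_int q = real i + real m * of_int d" by simp
  define p where "p = p0 + 2 * pi * of_int d"
  have "cis p = cis p0" unfolding p_def by (simp add: cis_mult[symmetric])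
  then have "w - u = complex_of_real (cmod (w - u)) * cis p" using polar by simp
  moreover have "a0 - p = a0 - p0 - real m * of_int d * ?th"
    unfolding p_def using full_turn by (simp add: algebra_simps)
  then have "bisector_dir m i - ?th / 2 \<le> p" "p < bisector_dir m i + ?th / 2"
    using q qi unfolding bisector_dir_def a0_def by (simp_all add: algebra_simps)
  ultimately show ?thesis unfolding in_cone_def using ne im by blast
qed

lemma in_cone_frame_polar:
  assumes "in_cone m i u v"
  obtains a where "\<bar>a\<bar> \<le> cone_angle m / 2"
    and "cone_frame m i (v - u) = complex_of_real (cmod (v - u)) * cis a"
proof -
  from assms obtain p where p: "bisector_dir m i - cone_angle m / 2 \<le> p"
     "p < bisector_dir m i + cone_angle m / 2" "v - u = complex_of_real (cmod (v - u)) * cis p"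
    unfolding in_cone_def by blast
  show ?thesis
  proof
    show "\<bar>p - bisector_dir m i\<bar> \<le> cone_angle m / 2" using p(1,2) by linarith
    show "cone_frame m i (v - u) = complex_of_real (cmod (v - u)) * cis (p - bisector_dir m i)"
      by (subst p(3)) (simp add: cone_frame_polar)
  qed
qed

lemma in_cone_frame_bounds:
  assumes c: "in_cone m i u v" and th: "0 < cone_angle m" "cone_angle m \<le> pi / 2"
  defines "h \<equiv> cone_angle m / 2"
  shows "cmod (v - u) * cos h \<le> Re (cone_frame m i (v - u))"
    and "\<bar>Im (cone_frame m i (v - u))\<bar> \<le> cmod (v - u) * sin h"
    and "potential (cone_frame m i (v - u)) \<le> cmod (v - u) * (cos h + sin h)"
proof -
  obtain a where a: "\<bar>a\<bar> \<le> h" and e: "cone_frame m i (v - u) = complex_of_real (cmod (v - u)) * cis a"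
    using in_cone_frame_polar[OF c] unfolding h_def by blast
  have "cos h \<le> cos \<bar>a\<bar>" using a th unfolding h_def by (intro cos_monotone_0_pi_le) auto
  then have cos_a: "cos h \<le> cos a" by simp
  have "sin \<bar>a\<bar> \<ge> 0" using a th unfolding h_def by (intro sin_ge_zero) auto
  then have abs_sin: "\<bar>sin a\<bar> = sin \<bar>a\<bar>" by (cases "a \<ge> 0") auto
  have "sin \<bar>a\<bar> \<le> sin h" using a th unfolding h_def by (intro sin_monotone_2pi_le) auto
  then have sin_a: "\<bar>sin a\<bar> \<le> sin h" using abs_sin by simp
  have "cos \<bar>a\<bar> + sin \<bar>a\<bar> \<le> cos h + sin h"
    using a th unfolding h_def by (intro cos_plus_sin_mono) auto
  then have pot_a: "cos a + \<bar>sin a\<bar> \<le> cos h + sin h" using abs_sin by simp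
  show "cmod (v - u) * cos h \<le> Re (cone_frame m i (v - u))"
    unfolding e using cos_a by (simp add: mult_left_mono)
  show "\<bar>Im (cone_frame m i (v - u))\<bar> \<le> cmod (v - u) * sin h"
    unfolding e using sin_a by (simp add: abs_mult mult_left_mono)
  show "potential (cone_frame m i (v - u)) \<le> cmod (v - u) * (cos h + sin h)"
    unfolding e using pot_a by (simp add: potential_polar mult_left_mono)
qed

lemma in_cone_frame_slope:
  assumes "in_cone m i u v" "0 < cone_angle m" "cone_angle m \<le> pi / 2"
  defines "z \<equiv> cone_frame m i (v - u)" and "c \<equiv> cos (cone_angle m / 2)" and "s \<equiv> sin (cone_angle m / 2)"
  shows "\<bar>Im z\<bar> * c \<le> Re z * s"
proof -
  have "0 \<le> c" "0 \<le> s" unfolding c_def s_def using assms(2,3)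
    by (auto intro: cos_ge_zero sin_ge_zero)
  moreover note in_cone_frame_bounds(1,2)[OF assms(1-3)]
  ultimately have "\<bar>Im z\<bar> * c \<le> cmod (v - u) * s * c" "cmod (v - u) * c * s \<le> Re z * s"
    unfolding z_def c_def s_def by (auto intro: mult_right_mono)
  then show ?thesis by (simp add: algebra_simps)
qed

lemma potential_own_cone_le:
  assumes m: "m = 4 * q" "q > 0" and c: "in_cone m j v w" and re: "Re (cone_frame m i (w - v)) \<ge> 0"
  shows "potential (cone_frame m j (w - v)) \<le> potential (cone_frame m i (w - v))"
proof -
  let ?th = "cone_angle m"
  from c obtain p where p: "bisector_dir m j - ?th / 2 \<le> p" "p < bisector_dir m j + ?th / 2"
      "w - v = complex_of_real (cmod (w - v)) * cis p" and ne: "w \<noteq> v"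
    unfolding in_cone_def by blast
  define r where "r = cmod (w - v)"
  have r: "r > 0" using ne unfolding r_def by simp
  have th: "0 < ?th" "?th * real q = pi / 2" using m by (auto simp: cone_angle_def field_simps)
  have frame: "cone_frame m l (w - v) = complex_of_real r * cis (p - bisector_dir m l)" for l
    by (subst p(3)) (simp add: cone_frame_polar r_def)
  have "0 \<le> r * cos (p - bisector_dir m i)" using re frame[of i] by simp
  then have cos_nonneg: "cos (p - bisector_dir m i) \<ge> 0" using r by (simp add: zero_le_mult_iff)
  have small: "\<bar>p - bisector_dir m j\<bar> \<le> ?th / 2" using p(1,2) by linarith
  have "(p - bisector_dir m i) - (p - bisector_dir m j) = of_int (int i - int j) * ?th"
    by (simp add: bisector_dir_def algebra_simps)
  from cos_abs_sin_lattice[OF th small this cos_nonneg] show ?thesis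
    unfolding frame using r by (simp add: potential_polar mult_left_mono)
qed

text \<open>With at least 8 cones the half cone angle is below 30 degrees.\<close>
lemma half_cone_constants:
  assumes "m \<ge> 8"
  defines "c \<equiv> cos (cone_angle m / 2)" and "s \<equiv> sin (cone_angle m / 2)"
  shows "0 < cone_angle m" "cone_angle m \<le> pi / 2" "0 < s" "0 < c" "3 * s^2 < c^2" "s < c" "c \<le> 1"
proof -
  have m8: "real m \<ge> 8" using assms(1) by simp
  show th0: "0 < cone_angle m" unfolding cone_angle_def using m8 by simp
  have "cone_angle m \<le> pi / 4" unfolding cone_angle_def using m8 pi_gt_zero
    by (simp add: divide_simps)
  then show "cone_angle m \<le> pi / 2" using pi_gt_zero by linarith
  have small: "cone_angle m / 2 < pi / 6" using \<open>cone_angle m \<le> pi / 4\<close> pi_gt_zero by linarith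
  show s0: "0 < s" unfolding s_def using th0 small by (intro sin_gt_zero) linarith+
  show c0: "0 < c" unfolding c_def using th0 small by (intro cos_gt_zero_pi) linarith+
  have "s < 1/2" unfolding s_def
    using th0 small sin_monotone_2pi[of "cone_angle m / 2" "pi/6"] sin_30 by linarith
  then have "s * s < (1/2) * (1/2)" using s0 by (intro mult_strict_mono) auto
  moreover have "c^2 + s^2 = 1" unfolding c_def s_def by (simp add: sin_cos_squared_add add.commute)
  ultimately show c3: "3 * s^2 < c^2" by (simp add: power2_eq_square)
  then have "s^2 < c^2" using zero_le_power2[of s] by linarith
  then show "s < c" using c0 by (intro power_less_imp_less_base[of s 2 c]) auto
  show "c \<le> 1" unfolding c_def by simp
qed

text \<open>Elementary inequality behind the shrinking of distances: two vectors A, B of slope at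
  most s/c with 0 < Re B \<le> Re A satisfy |A - B| < |A| when 3 s^2 < c^2 (angle below 30 deg).\<close>
lemma norm_diff_less:
  fixes a b x y c s :: real
  assumes b: "0 < b" "b \<le> a" and slope: "\<bar>x\<bar> * c \<le> a * s" "\<bar>y\<bar> * c \<le> b * s"
    and cs: "c > 0" "s \<ge> 0" "3 * s^2 < c^2"
  shows "(a - b)^2 + (x - y)^2 < a^2 + x^2"
proof -
  have ab: "a * b \<le> 2 * a * b - b^2" using b by (simp add: power2_eq_square mult_right_mono)
  have "\<bar>x\<bar> * c * (\<bar>y\<bar> * c) \<le> (a * s) * (b * s)"
    by (rule mult_mono) (use slope cs b in auto)
  then have xy: "c^2 * \<bar>x * y\<bar> \<le> a * b * s^2" by (simp add: abs_mult power2_eq_square algebra_simps)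
  have "(\<bar>y\<bar> * c) * (\<bar>y\<bar> * c) \<le> (b * s) * (b * s)"
    by (rule mult_mono) (use slope cs b in auto)
  moreover have "b^2 * s^2 \<le> a * b * s^2" using b by (intro mult_right_mono) (auto simp: power2_eq_square)
  ultimately have yy: "c^2 * y^2 \<le> a * b * s^2" by (simp add: power2_eq_square algebra_simps)
  have "c^2 * (- \<bar>x * y\<bar>) \<le> c^2 * (x * y)" by (rule mult_left_mono) auto
  moreover have "c^2 * (a * b) \<le> c^2 * (2 * a * b - b^2)" using ab by (simp add: mult_left_mono)
  moreover have "0 < a * b * (c^2 - 3 * s^2)" using b cs by simp
  ultimately have "0 < c^2 * (2*a*b - b^2 + 2*x*y - y^2)"
    using xy yy by (simp add: algebra_simps)
  then have "0 < 2*a*b - b^2 + 2*x*y - y^2" using cs by (simp add: zero_less_mult_iff)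
  then show ?thesis by (simp add: power2_eq_square algebra_simps)
qed

lemma closest_point_step:
  assumes m: "m = 4 * q" "q \<ge> 2"
    and v: "in_cone m i u v" and w: "in_cone m i u w" and j: "in_cone m j v w"
    and closest: "Re (cone_frame m i (v - u)) \<le> Re (cone_frame m i (w - u))"
  defines "c \<equiv> cos (cone_angle m / 2)" and "s \<equiv> sin (cone_angle m / 2)"
  shows "cmod (w - v) < cmod (w - u)"
    and "cmod (v - u) * (c - s) + potential (cone_frame m j (w - v)) \<le> potential (cone_frame m i (w - u))"
proof -
  define A where "A = cone_frame m i (w - u)"
  define B where "B = cone_frame m i (v - u)"
  define D where "D = cone_frame m i (w - v)"
  have ADB: "A = D + B" unfolding A_def B_def D_def by (rule cone_frame_diff)
  have "m \<ge> 8" using m by simp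
  note angle = half_cone_constants[OF this, folded c_def s_def]
  have "v \<noteq> u" using v unfolding in_cone_def by auto
  then have "0 < cmod (v - u) * c" using angle by simp
  with in_cone_frame_bounds(1)[OF v angle(1,2)] have B_pos: "0 < Re B"
    unfolding B_def c_def by linarith
  have "(Re A - Re B)^2 + (Im A - Im B)^2 < (Re A)^2 + (Im A)^2"
  proof (rule norm_diff_less[OF B_pos closest[folded A_def B_def]])
    show "\<bar>Im A\<bar> * c \<le> Re A * s" "\<bar>Im B\<bar> * c \<le> Re B * s"
      using in_cone_frame_slope[OF w angle(1,2)] in_cone_frame_slope[OF v angle(1,2)]
      unfolding A_def B_def c_def s_def by auto
  qed (use angle in auto)
  then have "(cmod D)^2 < (cmod A)^2" using ADB by (simp add: cmod_power2)
  then show "cmod (w - v) < cmod (w - u)" unfolding A_def D_def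
    by (simp add: power_less_imp_less_base)
  have "Re D \<ge> 0" using ADB closest unfolding A_def B_def by simp
  then have "potential (cone_frame m j (w - v)) \<le> potential D"
    unfolding D_def using potential_own_cone_le[OF m(1) _ j] m by simp
  moreover have "cmod (v - u) * c \<le> Re B" "\<bar>Im B\<bar> \<le> cmod (v - u) * s"
    using in_cone_frame_bounds(1,2)[OF v angle(1,2)] unfolding B_def c_def s_def by auto
  moreover have "\<bar>Im D\<bar> \<le> \<bar>Im A\<bar> + \<bar>Im B\<bar>" using ADB by simp
  ultimately show "cmod (v - u) * (c - s) + potential (cone_frame m j (w - v)) \<le> potential A"
    using ADB unfolding potential_def by (simp add: algebra_simps)
qed

lemma is_path_Cons:
  assumes "E u v" "is_path E ps v w"
  shows "is_path E (u # ps) u w" "path_length (u # ps) = cmod (v - u) + path_length ps"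
proof -
  obtain rest where ps: "ps = v # rest" using assms(2) unfolding is_path_def by (cases ps) auto
  show "is_path E (u # ps) u w"
    using assms unfolding is_path_def by (auto simp: ps nth_Cons split: nat.split)
  show "path_length (u # ps) = cmod (v - u) + path_length ps" by (simp add: ps)
qed

text \<open>Pairs of points of P at distance below d; its size is the induction measure.\<close>
definition shorter_pairs :: "complex set \<Rightarrow> real \<Rightarrow> (complex \<times> complex) set" where
  "shorter_pairs P d = {(a, b) \<in> P \<times> P. cmod (b - a) < d}"

lemma card_shorter_pairs_less:
  assumes "finite P" "v \<in> P" "w \<in> P" "cmod (w - v) < d"
  shows "card (shorter_pairs P (cmod (w - v))) < card (shorter_pairs P d)"
proof (rule psubset_card_mono)
  show "finite (shorter_pairs P d)" unfolding shorter_pairs_def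
    by (rule finite_subset[of _ "P \<times> P"]) (use assms(1) in auto)
  show "shorter_pairs P (cmod (w - v)) \<subset> shorter_pairs P d"
    using assms unfolding shorter_pairs_def by auto
qed

lemma theta_path_potential_bound:
  assumes m: "m = 4 * q" "q \<ge> 2" and fin: "finite P"
    and "u \<in> P" "w \<in> P" "i < m" "in_cone m i u w"
  defines "c \<equiv> cos (cone_angle m / 2)" and "s \<equiv> sin (cone_angle m / 2)"
  shows "\<exists>ps. is_path (theta_edge m P) ps u w \<and>
           path_length ps \<le> potential (cone_frame m i (w - u)) / (c - s)"
  using assms(4-7)
proof (induction "card (shorter_pairs P (cmod (w - u)))" arbitrary: u w i rule: less_induct)
  case less
  let ?E = "theta_edge m P"
  let ?pot = "\<lambda>l a b. potential (cone_frame m l (b - a))"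
  have "m \<ge> 8" using m by simp
  note angle = half_cone_constants[OF this, folded c_def s_def]
  have cs: "0 < c - s" using angle by simp
  let ?S = "{v \<in> P. in_cone m i u v}"
  obtain v where vS: "v \<in> ?S" and closest: "\<forall>y\<in>?S. Re (cone_frame m i (v - u)) \<le> Re (cone_frame m i (y - u))"
    using ex_is_arg_min_if_finite[of ?S "\<lambda>y. Re (cone_frame m i (y - u))"] fin less.prems(2,4)
    unfolding is_arg_min_linorder by auto
  have edge: "?E u v"
    unfolding theta_edge_def bisector_proj_cone_frame using less.prems vS closest by auto
  have "0 \<le> cmod (w - u) * c" using angle by simp
  then have Re_nonneg: "0 \<le> Re (cone_frame m i (w - u))"
    using in_cone_frame_bounds(1)[OF less.prems(4) angle(1,2)] unfolding c_def by linarith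
  then have pot_nonneg: "0 \<le> ?pot i u w" unfolding potential_def by simp
  show ?case
  proof (cases "v = w")
    case True
    have "is_path ?E [u, w] u w" using edge True unfolding is_path_def by (auto simp: less_Suc_eq)
    moreover have "cmod (w - u) \<le> ?pot i u w / (c - s)"
    proof -
      have "cmod (w - u) \<le> ?pot i u w"
        using norm_le_potential[OF Re_nonneg] by simp
      also have "\<dots> \<le> ?pot i u w / (c - s)"
        using pot_nonneg cs angle(3,7) by (simp add: le_divide_eq mult_left_le)
      finally show ?thesis .
    qed
    ultimately show ?thesis by (intro exI[of _ "[u, w]"]) simp
  next
    case False
    obtain j where j: "j < m" "in_cone m j v w" using cone_exists[of m w v] False m by auto
    have v: "v \<in> P" "in_cone m i u v" using vS by auto
    have "Re (cone_frame m i (v - u)) \<le> Re (cone_frame m i (w - u))" using closest less.prems by auto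
    note step = closest_point_step[OF m v(2) less.prems(4) j(2) this, folded c_def s_def]
    obtain ps where ps: "is_path ?E ps v w" "path_length ps \<le> ?pot j v w / (c - s)"
      using less.hyps[OF card_shorter_pairs_less[OF fin v(1) less.prems(2) step(1)] v(1) less.prems(2) j]
      by blast
    have "cmod (v - u) + ?pot j v w / (c - s) = (cmod (v - u) * (c - s) + ?pot j v w) / (c - s)"
      using cs by (simp add: add_divide_distrib)
    also have "\<dots> \<le> ?pot i u w / (c - s)" using step(2) cs by (simp add: divide_right_mono)
    finally have "cmod (v - u) + ?pot j v w / (c - s) \<le> ?pot i u w / (c - s)" .
    then show ?thesis using is_path_Cons[OF edge ps(1)] ps(2) by (intro exI[of _ "u # ps"]) auto
  qed
qed

lemma theta_graph_stretch:
  assumes m: "m = 4 * q" "q \<ge> 2" and fin: "finite P" and u: "u \<in> P" and w: "w \<in> P"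
  defines "c \<equiv> cos (cone_angle m / 2)" and "s \<equiv> sin (cone_angle m / 2)"
  shows "\<exists>ps. is_path (theta_edge m P) ps u w \<and> path_length ps \<le> (c + s) / (c - s) * cmod (w - u)"
proof (cases "u = w")
  case True
  then show ?thesis by (intro exI[of _ "[u]"]) (simp add: is_path_def)
next
  case False
  have "m \<ge> 8" using m by simp
  note angle = half_cone_constants[OF this, folded c_def s_def]
  obtain i where i: "i < m" "in_cone m i u w" using cone_exists[of m w u] False m by auto
  obtain ps where ps: "is_path (theta_edge m P) ps u w"
      "path_length ps \<le> potential (cone_frame m i (w - u)) / (c - s)"
    using theta_path_potential_bound[OF m fin u w i, folded c_def s_def] by blast
  have "potential (cone_frame m i (w - u)) \<le> cmod (w - u) * (c + s)"
    using in_cone_frame_bounds(3)[OF i(2) angle(1,2)] unfolding c_def s_def .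
  then have "potential (cone_frame m i (w - u)) / (c - s) \<le> (c + s) / (c - s) * cmod (w - u)"
    using divide_right_mono[of _ _ "c - s"] angle by (simp add: mult.commute)
  then show ?thesis using ps by auto
qed

theorem mainTheorem9:
  fixes k :: nat and P :: "complex set"
  assumes "k \<ge> 1" and "finite P" and "general_position (4 * k + 4) P"
  shows "is_spanner P (theta_edge (4 * k + 4) P)
           (1 + 2 * sin (cone_angle (4 * k + 4) / 2) /
                (cos (cone_angle (4 * k + 4) / 2) - sin (cone_angle (4 * k + 4) / 2)))"
proof -
  define m where "m = 4 * k + 4"
  define c where "c = cos (cone_angle m / 2)"
  define s where "s = sin (cone_angle m / 2)"
  have m: "m = 4 * (k + 1)" "k + 1 \<ge> 2" using assms(1) unfolding m_def by simp_all
  have "s < c" using half_cone_constants[of m] m unfolding c_def s_def by simp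
  then have stretch: "1 + 2 * s / (c - s) = (c + s) / (c - s)" by (simp add: field_simps)
  have "is_spanner P (theta_edge m P) ((c + s) / (c - s))"
    unfolding is_spanner_def c_def s_def using theta_graph_stretch[OF m assms(2)] by blast
  then show ?thesis unfolding m_def[symmetric] c_def[symmetric] s_def[symmetric] stretch .
qed

end
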